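(* Call $\ket{\phi}\in\mathcal H$ a dark state if $L_k\ket{\phi}=0$ for all $k$ and $H\ket{\phi}=\omega\ket{\phi}$ for some $\omega\in\mathbb R$, and let $\mathcal D\subseteq\mathcal H$ be the linear span of all dark states. Suppose there is no nonzero subspace $\mathcal S\subseteq\mathcal H$ with $\mathcal S\perp\mathcal D$ and $L_k\mathcal S\subseteq\mathcal S$ for all $k$. Then every operator $X\neq 0$ on $\mathcal H$ satisfying $\mathcal L X=i\Lambda X$ for some $\Lambda\in\mathbb R$ is a linear combination of operators $\ket{\phi}\bra{\psi}$ with $\ket{\phi},\ket{\psi}$ dark states (equivalently, $X=P_{\mathcal D}XP_{\mathcal D}$, where $P_{\mathcal D}$ is the orthogonal projector onto $\mathcal D$).
   Context: $\mathcal H$ is a finite-dimensional complex Hilbert space, $H=H^\dagger$ is an operator on $\mathcal H$ (the Hamiltonian), $L_k$ ($k$ in a finite index set) are operators on $\mathcal H$ (Lindblad operators) and $\gamma_k>0$ are rates. The Liouvillian is the linear map on operators on $\mathcal H$ given by $\mathcal L\rho=-i[H,\rho]+\sum_k\gamma_k\big(2L_k\rho L_k^\dagger-\{L_k^\dagger L_k,\rho\}\big)$, where $\{X,Y\}=XY+YX$. *)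

theory Defs
  imports "HOL-Analysis.Analysis"
begin

definition cinner :: "complex^'n \<Rightarrow> complex^'n \<Rightarrow> complex" where
  "cinner x y = (\<Sum>i\<in>UNIV. cnj (x$i) * y$i)"

definition cscale :: "complex \<Rightarrow> complex^'n \<Rightarrow> complex^'n" where
  "cscale c v = (\<chi> i. c * v$i)"

definition msc :: "complex \<Rightarrow> complex^'n^'m \<Rightarrow> complex^'n^'m" where
  "msc c M = (\<chi> i j. c * M$i$j)"

definition madj :: "complex^'n^'m \<Rightarrow> complex^'m^'n" where
  "madj M = (\<chi> i j. cnj (M$j$i))"

definition outer :: "complex^'n \<Rightarrow> complex^'n \<Rightarrow> complex^'n^'n" where
  "outer phi psi = (\<chi> i j. phi$i * cnj (psi$j))"

definition liouvillian ::
  "complex^'n^'n \<Rightarrow> 'k set \<Rightarrow> ('k \<Rightarrow> complex^'n^'n) \<Rightarrow> ('k \<Rightarrow> real)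
     \<Rightarrow> complex^'n^'n \<Rightarrow> complex^'n^'n" where
  "liouvillian H K L \<gamma> \<rho> =
     msc (- \<i>) (H ** \<rho> - \<rho> ** H)
     + (\<Sum>k\<in>K. msc (complex_of_real (\<gamma> k))
          (msc 2 (L k ** \<rho> ** madj (L k))
           - (madj (L k) ** L k ** \<rho> + \<rho> ** (madj (L k) ** L k))))"

definition dark_state ::
  "complex^'n^'n \<Rightarrow> 'k set \<Rightarrow> ('k \<Rightarrow> complex^'n^'n) \<Rightarrow> complex^'n \<Rightarrow> bool" where
  "dark_state H K L \<phi> \<longleftrightarrow>
     (\<forall>k\<in>K. L k *v \<phi> = 0) \<and> (\<exists>\<omega>::real. H *v \<phi> = cscale (complex_of_real \<omega>) \<phi>)"

definition cspan :: "(complex^'n) set \<Rightarrow> (complex^'n) set" where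
  "cspan A = {x. \<exists>F c. finite F \<and> F \<subseteq> A \<and> x = (\<Sum>v\<in>F. cscale (c v) v)}"

definition dark_space ::
  "complex^'n^'n \<Rightarrow> 'k set \<Rightarrow> ('k \<Rightarrow> complex^'n^'n) \<Rightarrow> (complex^'n) set" where
  "dark_space H K L = cspan {\<phi>. dark_state H K L \<phi>}"

definition csubspace :: "(complex^'n) set \<Rightarrow> bool" where
  "csubspace S \<longleftrightarrow> 0 \<in> S \<and> (\<forall>x\<in>S. \<forall>y\<in>S. x + y \<in> S) \<and> (\<forall>c. \<forall>x\<in>S. cscale c x \<in> S)"

end

theory Submission
  imports Defs
begin

text \<open>
  Let \<open>P\<close> be the orthogonal projector onto the dark space \<open>\<D>\<close> and \<open>Q = 1 - P\<close>.
  Since \<open>L\<^sub>k P = 0\<close> and \<open>[H, P] = 0\<close>, the Liouvillian is block triangular with respect to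
  \<open>X = PXP + PXQ + QXP + QXQ\<close>.

  If \<open>QXQ \<noteq> 0\<close>, the compressed equation \<open>Q \<L>(QYQ) Q = i\<Lambda> QYQ\<close> has a nonzero solution,
  hence so does its Hilbert--Schmidt adjoint: some \<open>Z = QZQ \<noteq> 0\<close> satisfies
  \<open>Q \<L>\<^sup>*(Z) Q = -i\<Lambda> Z\<close>, where \<open>\<L>\<^sup>*\<close> (\<open>dual_liouvillian\<close> below) is the Heisenberg-picture
  generator.  It obeys the dissipation identity
  \<open>\<L>\<^sup>*(Z\<^sup>\<dagger>Z) = Z\<^sup>\<dagger>\<L>\<^sup>*(Z) + \<L>\<^sup>*(Z)\<^sup>\<dagger>Z + 2 \<Sum>\<^sub>k \<gamma>\<^sub>k [Z, L\<^sub>k]\<^sup>\<dagger>[Z, L\<^sub>k]\<close>; evaluated on the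
  top eigenspace of \<open>Z\<^sup>\<dagger>Z\<close> it shows that this eigenspace is invariant under every \<open>L\<^sub>k\<close>.
  The eigenspace lies in the range of \<open>Q\<close>, so it is a nonzero invariant subspace orthogonal
  to \<open>\<D>\<close>, which is excluded.

  Once \<open>QXQ = 0\<close>, the block \<open>QXP\<close> solves \<open>-i[H, QXP] - \<Sum>\<^sub>k \<gamma>\<^sub>k L\<^sub>k\<^sup>\<dagger>L\<^sub>k QXP = i\<Lambda> QXP\<close>.
  For a dark state \<open>\<phi>\<close> the real part of the quadratic form at \<open>QXP\<phi>\<close> forces \<open>L\<^sub>k QXP\<phi> = 0\<close>,
  so \<open>QXP\<phi>\<close> is itself dark and therefore zero.  Finally \<open>PXQ = 0\<close> by taking adjoints, since
  \<open>\<L>\<close> commutes with the adjoint.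
\<close>

lemma cscale_nth [simp]: "cscale c v $ i = c * v $ i"
  by (simp add: cscale_def)

lemma msc_nth [simp]: "msc c M $ i $ j = c * M $ i $ j"
  by (simp add: msc_def)

lemma madj_nth [simp]: "madj M $ i $ j = cnj (M $ j $ i)"
  by (simp add: madj_def)

lemma outer_nth [simp]: "outer a b $ i $ j = a $ i * cnj (b $ j)"
  by (simp add: outer_def)

global_interpretation cvec: vector_space "cscale :: complex \<Rightarrow> complex^'n \<Rightarrow> complex^'n"
  by unfold_locales (simp_all add: vec_eq_iff algebra_simps)

global_interpretation cmat: vector_space "msc :: complex \<Rightarrow> complex^'n^'m \<Rightarrow> complex^'n^'m"
  by unfold_locales (simp_all add: vec_eq_iff algebra_simps)

lemma cspan_eq_span: "cspan A = cvec.span A"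
  unfolding cspan_def cvec.span_explicit by blast

lemma scaleR_eq_cscale: "r *\<^sub>R (x :: complex^'n) = cscale (complex_of_real r) x"
  by (simp add: vec_eq_iff) (simp add: scaleR_conv_of_real)

lemma scaleR_eq_msc: "r *\<^sub>R (x :: complex^'n^'m) = msc (complex_of_real r) x"
  by (simp add: vec_eq_iff) (simp add: scaleR_conv_of_real)

lemma vec_sum_axis: "(x :: complex^'n) = (\<Sum>j\<in>UNIV. cscale (x $ j) (axis j 1))"
  by (simp add: vec_eq_iff axis_def if_distrib if_distribR cong: if_cong)

lemma matrix_vector_mult_nth: "(A *v x) $ i = (\<Sum>j\<in>UNIV. A $ i $ j * x $ j)"
  by (simp add: matrix_vector_mult_def)

lemma matrix_matrix_mult_nth: "(A ** B) $ i $ j = (\<Sum>k\<in>UNIV. A $ i $ k * B $ k $ j)"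
  by (simp add: matrix_matrix_mult_def)

lemma matrix_vector_mult_axis: "(A *v axis j 1) $ i = A $ i $ j"
  unfolding matrix_vector_mult_nth axis_def by (simp add: if_distrib if_distribR cong: if_cong)

lemma msc_matrix_vector_mult:
  fixes A :: "complex^'n^'m" shows "msc c A *v x = cscale c (A *v x)"
  by (simp add: vec_eq_iff matrix_vector_mult_nth sum_distrib_left algebra_simps)

lemma matrix_vector_mult_cscale:
  fixes A :: "complex^'n^'m" shows "A *v cscale c x = cscale c (A *v x)"
  by (simp add: vec_eq_iff matrix_vector_mult_nth sum_distrib_left algebra_simps)

lemma matrix_vector_mult_scaleR_complex:
  fixes A :: "complex^'n^'m" shows "A *v (r *\<^sub>R x) = r *\<^sub>R (A *v x)"
  by (simp add: scaleR_eq_cscale matrix_vector_mult_cscale)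

lemma matrix_vector_mult_neg_left:
  fixes A :: "complex^'n^'m" shows "(- A) *v x = - (A *v x)"
  by (simp add: vec_eq_iff matrix_vector_mult_nth sum_negf)

lemma matrix_vector_mult_sum_left:
  fixes f :: "'k \<Rightarrow> complex^'n^'m"
  shows "finite S \<Longrightarrow> sum f S *v x = (\<Sum>k\<in>S. f k *v x)"
  by (induction S rule: finite_induct) (simp_all add: matrix_vector_mult_add_rdistrib)

lemma matrix_vector_mult_sum_right:
  fixes A :: "complex^'n^'m"
  shows "finite S \<Longrightarrow> A *v sum f S = (\<Sum>k\<in>S. A *v f k)"
  by (induction S rule: finite_induct) (simp_all add: matrix_vector_right_distrib)

lemma matrix_add_rdistrib:
  fixes A B :: "complex^'n^'m" shows "(A + B) ** C = A ** C + B ** C"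
  by (simp add: vec_eq_iff matrix_matrix_mult_nth sum.distrib algebra_simps)

lemma matrix_diff_rdistrib:
  fixes A B :: "complex^'n^'m" shows "(A - B) ** C = A ** C - B ** C"
  by (simp add: vec_eq_iff matrix_matrix_mult_nth sum_subtractf[symmetric] algebra_simps)

lemma matrix_diff_ldistrib:
  fixes A :: "complex^'n^'m" shows "A ** (B - C) = A ** B - A ** C"
  by (simp add: vec_eq_iff matrix_matrix_mult_nth sum_subtractf[symmetric] algebra_simps)

lemma matrix_mult_msc_left:
  fixes A :: "complex^'n^'m" shows "msc c A ** B = msc c (A ** B)"
  by (simp add: vec_eq_iff matrix_matrix_mult_nth sum_distrib_left algebra_simps)

lemma matrix_mult_msc_right:
  fixes A :: "complex^'n^'m" shows "A ** msc c B = msc c (A ** B)"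
  by (simp add: vec_eq_iff matrix_matrix_mult_nth sum_distrib_left algebra_simps)

lemma matrix_mult_neg_left:
  fixes A :: "complex^'n^'m" shows "(- A) ** B = - (A ** B)"
  by (simp add: vec_eq_iff matrix_matrix_mult_nth sum_negf)

lemma matrix_mult_neg_right:
  fixes A :: "complex^'n^'m" shows "A ** (- B) = - (A ** B)"
  by (simp add: vec_eq_iff matrix_matrix_mult_nth sum_negf)

lemma matrix_mult_sum_left:
  fixes f :: "'k \<Rightarrow> complex^'n^'m"
  shows "finite S \<Longrightarrow> sum f S ** B = (\<Sum>k\<in>S. f k ** B)"
  by (induction S rule: finite_induct) (simp_all add: matrix_add_rdistrib)

lemma matrix_mult_sum_right:
  fixes A :: "complex^'n^'m"
  shows "finite S \<Longrightarrow> A ** sum f S = (\<Sum>k\<in>S. A ** f k)"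
  by (induction S rule: finite_induct) (simp_all add: matrix_add_ldistrib)

lemmas matrix_mult_distribs = matrix_add_rdistrib matrix_add_ldistrib matrix_diff_rdistrib
  matrix_diff_ldistrib matrix_mult_msc_left matrix_mult_msc_right matrix_mult_sum_left
  matrix_mult_sum_right matrix_mult_neg_left matrix_mult_neg_right

lemma msc_add: "msc c (A + B) = msc c A + msc c B"
  by (simp add: vec_eq_iff algebra_simps)

lemma msc_diff: "msc c (A - B) = msc c A - msc c B"
  by (simp add: vec_eq_iff algebra_simps)

lemma msc_zero [simp]: "msc c 0 = 0"
  by (simp add: vec_eq_iff)

lemma msc_msc: "msc a (msc b A) = msc (a * b) A"
  by (simp add: vec_eq_iff)

lemma msc_sum: "finite S \<Longrightarrow> msc c (sum f S) = (\<Sum>k\<in>S. msc c (f k))"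
  by (induction S rule: finite_induct) (simp_all add: msc_add)

lemma madj_madj [simp]: "madj (madj A) = A"
  by (simp add: vec_eq_iff)

lemma madj_zero [simp]: "madj 0 = 0"
  by (simp add: vec_eq_iff)

lemma madj_add: "madj (A + B) = madj A + madj B"
  by (simp add: vec_eq_iff)

lemma madj_diff: "madj (A - B) = madj A - madj B"
  by (simp add: vec_eq_iff)

lemma madj_msc: "madj (msc c A) = msc (cnj c) (madj A)"
  by (simp add: vec_eq_iff)

lemma madj_sum: "finite S \<Longrightarrow> madj (sum f S) = (\<Sum>k\<in>S. madj (f k))"
  by (induction S rule: finite_induct) (simp_all add: madj_add)

lemma madj_matrix_mult: "madj (A ** B) = madj B ** madj A"
  by (simp add: vec_eq_iff matrix_matrix_mult_nth mult.commute)

lemma cinner_add_left: "cinner (x + y) z = cinner x z + cinner y z"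
  by (simp add: cinner_def sum.distrib algebra_simps)

lemma cinner_add_right: "cinner z (x + y) = cinner z x + cinner z y"
  by (simp add: cinner_def sum.distrib algebra_simps)

lemma cinner_diff_left: "cinner (x - y) z = cinner x z - cinner y z"
  by (simp add: cinner_def sum_subtractf algebra_simps)

lemma cinner_diff_right: "cinner z (x - y) = cinner z x - cinner z y"
  by (simp add: cinner_def sum_subtractf algebra_simps)

lemma cinner_neg_right: "cinner z (- x) = - cinner z x"
  by (simp add: cinner_def sum_negf)

lemma cinner_cscale_left: "cinner (cscale c x) z = cnj c * cinner x z"
  by (simp add: cinner_def sum_distrib_left algebra_simps)

lemma cinner_cscale_right: "cinner z (cscale c x) = c * cinner z x"
  by (simp add: cinner_def sum_distrib_left algebra_simps)

lemma cinner_zero_left: "cinner 0 x = 0"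
  by (simp add: cinner_def)

lemma cinner_zero_right: "cinner x 0 = 0"
  by (simp add: cinner_def)

lemma cinner_sum_right: "finite S \<Longrightarrow> cinner z (sum f S) = (\<Sum>k\<in>S. cinner z (f k))"
  by (induction S rule: finite_induct) (simp_all add: cinner_add_right cinner_zero_right)

lemmas cinner_simps = cinner_add_left cinner_add_right cinner_diff_left cinner_diff_right
  cinner_cscale_left cinner_cscale_right cinner_zero_left cinner_zero_right cinner_sum_right

lemma cinner_commute: "cinner y x = cnj (cinner x y)"
  by (simp add: cinner_def mult.commute)

lemma cinner_madj: "cinner (A *v x) y = cinner x (madj A *v y)"
proof -
  have "cinner (A *v x) y = (\<Sum>i\<in>UNIV. \<Sum>j\<in>UNIV. cnj (A $ i $ j) * cnj (x $ j) * y $ i)"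
    by (simp add: cinner_def matrix_vector_mult_nth sum_distrib_right)
  also have "\<dots> = (\<Sum>j\<in>UNIV. \<Sum>i\<in>UNIV. cnj (A $ i $ j) * cnj (x $ j) * y $ i)"
    by (rule sum.swap)
  also have "\<dots> = cinner x (madj A *v y)"
    by (simp add: cinner_def matrix_vector_mult_nth sum_distrib_left algebra_simps)
  finally show ?thesis .
qed

lemma Re_cinner: "Re (cinner x y) = inner x y"
  by (simp add: cinner_def inner_vec_def inner_complex_def)

lemma cinner_self: "cinner x x = complex_of_real (inner x x)"
  by (simp add: complex_eq_iff Re_cinner) (simp add: cinner_def)

lemma cinner_self_eq_0: "cinner x x = 0 \<longleftrightarrow> x = 0"
  by (simp add: cinner_self)

lemma cinner_ext: "(\<And>z. cinner z x = cinner z y) \<Longrightarrow> x = y"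
  by (metis cinner_diff_right cinner_self_eq_0 right_minus_eq)

lemma Im_cinner_hermitian:
  assumes "madj H = H" shows "Im (cinner w (H *v w)) = 0"
proof -
  have "cinner w (H *v w) = cnj (cinner w (H *v w))"
    by (metis assms cinner_commute cinner_madj)
  then show ?thesis
    by (metis Reals_cnj_iff complex_is_Real_iff)
qed

definition hs :: "complex^'n^'m \<Rightarrow> complex^'n^'m \<Rightarrow> complex" where
  "hs A B = (\<Sum>i\<in>UNIV. \<Sum>j\<in>UNIV. cnj (A $ i $ j) * B $ i $ j)"

lemma inner_eq_Re_hs: fixes A B :: "complex^'n^'m" shows "inner A B = Re (hs A B)"
  by (simp add: hs_def inner_vec_def inner_complex_def)

lemma hs_add_left: "hs (A + B) C = hs A C + hs B C"
  by (simp add: hs_def sum.distrib algebra_simps)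

lemma hs_add_right: "hs C (A + B) = hs C A + hs C B"
  by (simp add: hs_def sum.distrib algebra_simps)

lemma hs_diff_left: "hs (A - B) C = hs A C - hs B C"
  by (simp add: hs_def sum_subtractf[symmetric] algebra_simps)

lemma hs_diff_right: "hs C (A - B) = hs C A - hs C B"
  by (simp add: hs_def sum_subtractf[symmetric] algebra_simps)

lemma hs_msc_left: "hs (msc c A) B = cnj c * hs A B"
  by (simp add: hs_def sum_distrib_left algebra_simps)

lemma hs_msc_right: "hs A (msc c B) = c * hs A B"
  by (simp add: hs_def sum_distrib_left algebra_simps)

lemma hs_zero_left: "hs 0 B = 0"
  by (simp add: hs_def)

lemma hs_zero_right: "hs B 0 = 0"
  by (simp add: hs_def)

lemma hs_sum_left: "finite S \<Longrightarrow> hs (sum f S) B = (\<Sum>k\<in>S. hs (f k) B)"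
  by (induction S rule: finite_induct) (simp_all add: hs_add_left hs_zero_left)

lemma hs_sum_right: "finite S \<Longrightarrow> hs B (sum f S) = (\<Sum>k\<in>S. hs B (f k))"
  by (induction S rule: finite_induct) (simp_all add: hs_add_right hs_zero_right)

lemmas hs_simps = hs_add_left hs_add_right hs_diff_left hs_diff_right hs_msc_left
  hs_msc_right hs_sum_left hs_sum_right hs_zero_left hs_zero_right

lemma hs_matrix_mult_left:
  fixes A :: "complex^'p^'m" and B :: "complex^'n^'p"
  shows "hs (A ** B) C = hs B (madj A ** C)"
proof -
  have "hs (A ** B) C = (\<Sum>i\<in>UNIV. \<Sum>j\<in>UNIV. \<Sum>k\<in>UNIV. cnj (A$i$k) * cnj (B$k$j) * C$i$j)"
    by (simp add: hs_def matrix_matrix_mult_nth sum_distrib_right)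
  also have "\<dots> = (\<Sum>j\<in>UNIV. \<Sum>i\<in>UNIV. \<Sum>k\<in>UNIV. cnj (A$i$k) * cnj (B$k$j) * C$i$j)"
    by (rule sum.swap)
  also have "\<dots> = (\<Sum>j\<in>UNIV. \<Sum>k\<in>UNIV. \<Sum>i\<in>UNIV. cnj (A$i$k) * cnj (B$k$j) * C$i$j)"
    by (rule sum.cong[OF refl], rule sum.swap)
  also have "\<dots> = (\<Sum>k\<in>UNIV. \<Sum>j\<in>UNIV. \<Sum>i\<in>UNIV. cnj (A$i$k) * cnj (B$k$j) * C$i$j)"
    by (rule sum.swap)
  also have "\<dots> = hs B (madj A ** C)"
    by (simp add: hs_def matrix_matrix_mult_nth sum_distrib_left algebra_simps)
  finally show ?thesis .
qed

lemma hs_matrix_mult_right: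
  fixes A :: "complex^'n^'p" and B :: "complex^'p^'m"
  shows "hs (B ** A) C = hs B (C ** madj A)"
proof -
  have "hs (B ** A) C = (\<Sum>i\<in>UNIV. \<Sum>j\<in>UNIV. \<Sum>k\<in>UNIV. cnj (B$i$k) * cnj (A$k$j) * C$i$j)"
    by (simp add: hs_def matrix_matrix_mult_nth sum_distrib_right)
  also have "\<dots> = (\<Sum>i\<in>UNIV. \<Sum>k\<in>UNIV. \<Sum>j\<in>UNIV. cnj (B$i$k) * cnj (A$k$j) * C$i$j)"
    by (rule sum.cong[OF refl], rule sum.swap)
  also have "\<dots> = hs B (C ** madj A)"
    by (simp add: hs_def matrix_matrix_mult_nth sum_distrib_left algebra_simps)
  finally show ?thesis .
qed

lemma hs_sandwich: "hs (A ** Y ** B) Z = hs Y (madj A ** Z ** madj B)"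
  by (subst hs_matrix_mult_right, subst hs_matrix_mult_left) (simp add: matrix_mul_assoc)

section \<open>Orthogonal projections and adjoints\<close>

lemma subspace_if_cvec_subspace: "cvec.subspace D \<Longrightarrow> subspace D"
  unfolding subspace_def cvec.subspace_def by (simp add: scaleR_eq_cscale)

text \<open>A complex subspace is closed under multiplication by \<open>\<i>\<close>, so its real orthogonal
  complement is also its complex orthogonal complement.\<close>

lemma cvec_orthogonal_decomp:
  assumes D: "cvec.subspace D"
  obtains y where "y \<in> D" "\<forall>d\<in>D. cinner d (x - y) = 0"
proof -
  obtain y z where y: "y \<in> span D" and z: "\<And>w. w \<in> span D \<Longrightarrow> orthogonal z w"
    and xyz: "x = y + z"
    using orthogonal_subspace_decomp_exists by blast
  have "y \<in> D"
    using y subspace_if_cvec_subspace[OF D] by (metis span_eq_iff)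
  moreover have "cinner d z = 0" if d: "d \<in> D" for d
  proof -
    have "cscale \<i> d \<in> D"
      using D d by (rule cvec.subspace_scale)
    then have "Re (cinner (cscale \<i> d) z) = 0"
      using z[OF span_base[of "cscale \<i> d"]] by (simp add: Re_cinner orthogonal_def inner_commute)
    moreover have "Re (cinner d z) = 0"
      using z[OF span_base[OF d]] by (simp add: Re_cinner orthogonal_def inner_commute)
    ultimately show ?thesis
      by (simp add: cinner_cscale_left complex_eq_iff)
  qed
  ultimately show ?thesis
    using that xyz by auto
qed

lemma cvec_orthogonal_decomp_unique:
  assumes D: "cvec.subspace D"
    and "y\<^sub>1 \<in> D" "\<forall>d\<in>D. cinner d (x - y\<^sub>1) = 0"
    and "y\<^sub>2 \<in> D" "\<forall>d\<in>D. cinner d (x - y\<^sub>2) = 0"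
  shows "y\<^sub>1 = y\<^sub>2"
proof -
  have "y\<^sub>1 - y\<^sub>2 \<in> D"
    using assms by (simp add: cvec.subspace_diff)
  moreover have "cinner (y\<^sub>1 - y\<^sub>2) (y\<^sub>1 - y\<^sub>2)
      = cinner (y\<^sub>1 - y\<^sub>2) (x - y\<^sub>2) - cinner (y\<^sub>1 - y\<^sub>2) (x - y\<^sub>1)"
    by (simp add: cinner_simps)
  ultimately show ?thesis
    using assms by (simp add: cinner_self_eq_0)
qed

lemma cvec_linear_map_is_matrix:
  fixes p :: "complex^'n \<Rightarrow> complex^'m"
  assumes add: "\<And>x y. p (x + y) = p x + p y" and scale: "\<And>c x. p (cscale c x) = cscale c (p x)"
  obtains P where "\<And>x. P *v x = p x"
proof
  have p_0: "p 0 = 0"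
    using add[of 0 0] by simp
  have p_sum: "p (sum f S) = (\<Sum>j\<in>S. p (f j))" if "finite S" for f :: "'a \<Rightarrow> complex^'n" and S
    using that by (induction S rule: finite_induct) (simp_all add: add p_0)
  fix x
  have "p x = (\<Sum>j\<in>UNIV. cscale (x $ j) (p (axis j 1)))"
    by (subst vec_sum_axis) (simp add: p_sum scale)
  then show "(\<chi> i j. p (axis j 1) $ i) *v x = p x"
    by (simp add: vec_eq_iff matrix_vector_mult_nth mult.commute)
qed

lemma madj_eq_self_if_symmetric:
  assumes "\<And>x y. cinner (A *v x) y = cinner x (A *v y)"
  shows "madj A = A"
  unfolding matrix_eq using assms by (metis cinner_madj cinner_ext)

lemma orthogonal_projector_exists:
  fixes D :: "(complex^'n) set"
  assumes D: "cvec.subspace D"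
  obtains P where "madj P = P" "P ** P = P" "\<forall>x. P *v x \<in> D" "\<forall>d\<in>D. P *v d = d"
proof -
  define p where "p x = (SOME y. y \<in> D \<and> (\<forall>d\<in>D. cinner d (x - y) = 0))" for x
  have p: "p x \<in> D \<and> (\<forall>d\<in>D. cinner d (x - p x) = 0)" for x
    unfolding p_def by (rule someI_ex) (metis cvec_orthogonal_decomp[OF D])
  have p_unique: "p x = y" if "y \<in> D" "\<forall>d\<in>D. cinner d (x - y) = 0" for x y
    using cvec_orthogonal_decomp_unique[OF D] p that by blast
  have p_add: "p (x + y) = p x + p y" for x y
  proof (rule p_unique)
    show "p x + p y \<in> D"
      using p D by (simp add: cvec.subspace_add)
    have e: "x + y - (p x + p y) = (x - p x) + (y - p y)"
      by (simp add: algebra_simps)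
    show "\<forall>d\<in>D. cinner d (x + y - (p x + p y)) = 0"
      using p unfolding e by (simp add: cinner_add_right)
  qed
  have p_cscale: "p (cscale c x) = cscale c (p x)" for c x
  proof (rule p_unique)
    show "cscale c (p x) \<in> D"
      using p D by (simp add: cvec.subspace_scale)
    have e: "cscale c x - cscale c (p x) = cscale c (x - p x)"
      by (simp add: vec_eq_iff algebra_simps)
    show "\<forall>d\<in>D. cinner d (cscale c x - cscale c (p x)) = 0"
      using p unfolding e by (simp add: cinner_cscale_right)
  qed
  obtain P where P: "\<And>x. P *v x = p x"
    using cvec_linear_map_is_matrix[OF p_add p_cscale] by blast
  have p_fixes: "p d = d" if "d \<in> D" for d
    using that by (intro p_unique) (auto simp: cinner_zero_right)
  have "cinner (P *v x) y = cinner x (P *v y)" for x y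
  proof -
    have "cinner (p x) y = cinner (p x) (p y) + cinner (p x) (y - p y)"
      by (simp add: cinner_simps)
    moreover have "cinner x (p y) = cinner (p x) (p y) + cnj (cinner (p y) (x - p x))"
      by (simp add: cinner_simps cinner_commute[of "p y"])
    ultimately show ?thesis
      using p by (simp add: P)
  qed
  then have "madj P = P"
    by (rule madj_eq_self_if_symmetric)
  moreover have "P ** P = P"
    unfolding matrix_eq by (simp add: matrix_vector_mul_assoc[symmetric] P p p_fixes)
  ultimately show ?thesis
    using that by (simp add: P p p_fixes)
qed

lemma adjoint_kernel_nontrivial:
  fixes T T' :: "'a::euclidean_space \<Rightarrow> 'a"
  assumes "linear T" and adjoint: "\<And>x y. inner (T x) y = inner x (T' y)"
    and "T x = 0" "x \<noteq> 0"
  obtains y where "y \<noteq> 0" "T' y = 0"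
proof -
  have "\<not> inj T"
    using assms linear_0[OF \<open>linear T\<close>] by (metis injD)
  then obtain y where "y \<noteq> 0" "\<forall>x. inner y (T x) = 0"
    using linear_singular_into_hyperplane[OF \<open>linear T\<close>] by blast
  moreover have "inner (T' y) (T' y) = inner y (T (T' y))"
    using adjoint[of "T' y" y] by (simp add: inner_commute)
  ultimately show ?thesis
    using that by simp
qed

section \<open>The Liouvillian and its dual\<close>

lemma liouvillian_add:
  assumes "finite K"
  shows "liouvillian H K L \<gamma> (A + B) = liouvillian H K L \<gamma> A + liouvillian H K L \<gamma> B"
  unfolding liouvillian_def
  by (simp add: matrix_mult_distribs msc_add msc_diff sum.distrib[symmetric] algebra_simps)

lemma liouvillian_msc:
  assumes "finite K"
  shows "liouvillian H K L \<gamma> (msc c A) = msc c (liouvillian H K L \<gamma> A)"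
  unfolding liouvillian_def
  by (simp add: matrix_mult_distribs msc_add msc_diff msc_sum[OF assms] msc_msc ac_simps)

lemma madj_liouvillian:
  assumes "finite K" "madj H = H"
  shows "madj (liouvillian H K L \<gamma> X) = liouvillian H K L \<gamma> (madj X)"
proof -
  have "msc \<i> (A - B) = msc (- \<i>) (B - A)" for A B :: "complex^'n^'n"
    by (simp add: vec_eq_iff algebra_simps)
  moreover have "madj (liouvillian H K L \<gamma> X) = msc \<i> (madj X ** H - H ** madj X)
     + (\<Sum>k\<in>K. msc (complex_of_real (\<gamma> k)) (msc 2 (L k ** madj X ** madj (L k))
          - (madj X ** (madj (L k) ** L k) + madj (L k) ** L k ** madj X)))"
    unfolding liouvillian_def
    by (simp only: madj_add madj_diff madj_msc madj_sum[OF assms(1)] madj_matrix_mult madj_madj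
        assms(2) matrix_mul_assoc complex_cnj_numeral complex_cnj_complex_of_real
        complex_cnj_minus complex_cnj_i minus_minus)
  ultimately show ?thesis
    unfolding liouvillian_def by (simp add: add.commute)
qed

definition dual_commutator :: "complex^'n^'n \<Rightarrow> complex^'n^'n \<Rightarrow> complex^'n^'n" where
  "dual_commutator H Z = msc \<i> (H ** Z - Z ** H)"

definition dual_dissipator :: "complex^'n^'n \<Rightarrow> complex^'n^'n \<Rightarrow> complex^'n^'n" where
  "dual_dissipator M Z = msc 2 (madj M ** Z ** M) - (madj M ** M ** Z + Z ** (madj M ** M))"

definition dual_liouvillian ::
  "complex^'n^'n \<Rightarrow> 'k set \<Rightarrow> ('k \<Rightarrow> complex^'n^'n) \<Rightarrow> ('k \<Rightarrow> real)
     \<Rightarrow> complex^'n^'n \<Rightarrow> complex^'n^'n" where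
  "dual_liouvillian H K L \<gamma> Z =
     dual_commutator H Z + (\<Sum>k\<in>K. msc (complex_of_real (\<gamma> k)) (dual_dissipator (L k) Z))"

lemma hs_liouvillian:
  assumes "finite K" "madj H = H"
  shows "hs (liouvillian H K L \<gamma> Y) Z = hs Y (dual_liouvillian H K L \<gamma> Z)"
  unfolding liouvillian_def dual_liouvillian_def dual_commutator_def dual_dissipator_def
  apply (simp only: hs_add_left hs_diff_left hs_msc_left hs_sum_left[OF assms(1)]
      hs_sandwich[where Y = Y] hs_matrix_mult_left[where B = Y] hs_matrix_mult_right[where B = Y])
  apply (simp add: assms hs_simps madj_matrix_mult matrix_mul_assoc algebra_simps)
  done

text \<open>The dissipation identities: each dual generator acts on \<open>Z\<^sup>\<dagger>Z\<close> by the Leibniz rule,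
  up to a positive correction \<open>2 [Z, M]\<^sup>\<dagger>[Z, M]\<close> per Lindblad operator \<open>M\<close>.\<close>

lemma dual_commutator_gram:
  assumes "madj H = H"
  shows "dual_commutator H (madj Z ** Z) = madj Z ** dual_commutator H Z + madj (dual_commutator H Z) ** Z"
  unfolding dual_commutator_def
  by (simp add: assms matrix_mult_distribs madj_add madj_diff madj_msc madj_matrix_mult
      matrix_mul_assoc msc_diff vec_eq_iff algebra_simps)

lemma dual_dissipator_gram:
  "dual_dissipator M (madj Z ** Z) = madj Z ** dual_dissipator M Z + madj (dual_dissipator M Z) ** Z
     + msc 2 (madj (Z ** M - M ** Z) ** (Z ** M - M ** Z))"
proof -
  have lhs: "dual_dissipator M (madj Z ** Z) = msc 2 (madj M ** madj Z ** Z ** M)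
      - (madj M ** M ** madj Z ** Z + madj Z ** Z ** madj M ** M)"
    unfolding dual_dissipator_def by (simp only: matrix_mul_assoc)
  have left: "madj Z ** dual_dissipator M Z = msc 2 (madj Z ** madj M ** Z ** M)
      - (madj Z ** madj M ** M ** Z + madj Z ** Z ** madj M ** M)"
    unfolding dual_dissipator_def
    by (simp only: matrix_diff_ldistrib matrix_add_ldistrib matrix_mult_msc_right matrix_mul_assoc)
  have right: "madj (dual_dissipator M Z) ** Z = msc 2 (madj M ** madj Z ** M ** Z)
      - (madj Z ** madj M ** M ** Z + madj M ** M ** madj Z ** Z)"
    unfolding dual_dissipator_def
    by (simp only: madj_diff madj_add madj_msc madj_matrix_mult madj_madj complex_cnj_numeral
        matrix_diff_rdistrib matrix_add_rdistrib matrix_mult_msc_left matrix_mul_assoc)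
  have comm: "madj (Z ** M - M ** Z) ** (Z ** M - M ** Z) = madj M ** madj Z ** Z ** M
      - madj M ** madj Z ** M ** Z - madj Z ** madj M ** Z ** M + madj Z ** madj M ** M ** Z"
    by (simp only: madj_diff madj_matrix_mult matrix_diff_rdistrib matrix_diff_ldistrib
        matrix_mul_assoc) (simp add: algebra_simps)
  show ?thesis
    unfolding lhs left right comm by (simp add: vec_eq_iff algebra_simps)
qed

lemma dual_liouvillian_gram:
  assumes "finite K" "madj H = H"
  shows "dual_liouvillian H K L \<gamma> (madj Z ** Z)
     = madj Z ** dual_liouvillian H K L \<gamma> Z + madj (dual_liouvillian H K L \<gamma> Z) ** Z
       + (\<Sum>k\<in>K. msc (complex_of_real (2 * \<gamma> k))
                   (madj (Z ** L k - L k ** Z) ** (Z ** L k - L k ** Z)))"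
  unfolding dual_liouvillian_def
  by (simp add: dual_commutator_gram dual_dissipator_gram assms matrix_mult_distribs madj_add
      madj_sum madj_msc msc_add msc_msc sum.distrib mult.commute)

section \<open>Top eigenvectors of \<open>Z\<^sup>\<dagger>Z\<close>\<close>

lemma linear_coeff_zero_if_quadratic_nonpos:
  fixes a b :: real
  assumes "\<forall>t. 2 * t * a + t\<^sup>2 * b \<le> 0"
  shows "a = 0"
proof -
  define s where "s = \<bar>b\<bar> + 1"
  have s: "s > 0" "2 * s + b > 0"
    by (auto simp: s_def abs_if)
  have "(2 * (a / s) * a + (a / s)\<^sup>2 * b) * s\<^sup>2 = a\<^sup>2 * (2 * s + b)"
    using s by (simp add: power2_eq_square field_simps)
  moreover have "2 * (a / s) * a + (a / s)\<^sup>2 * b \<le> 0"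
    using assms by blast
  ultimately have "a\<^sup>2 * (2 * s + b) \<le> 0"
    by (metis mult_nonpos_nonneg zero_le_power2)
  then have "a\<^sup>2 \<le> 0"
    using s by (simp add: mult_le_0_iff)
  then show ?thesis
    by simp
qed

lemma inner_gram:
  fixes Z :: "complex^'n^'n"
  shows "inner ((madj Z ** Z) *v w) y = inner (Z *v w) (Z *v y)"
proof -
  have "cinner ((madj Z ** Z) *v w) y = cinner (Z *v w) (Z *v y)"
    by (simp add: cinner_madj flip: matrix_vector_mul_assoc)
  then show ?thesis
    by (metis Re_cinner)
qed

lemma matrix_vector_norm_max_attained:
  fixes Z :: "complex^'n^'n"
  obtains v where "norm v = 1" "\<And>u. norm (Z *v u) \<le> norm (Z *v v) * norm u"
proof -
  have "continuous_on (sphere 0 1) (\<lambda>u. norm (Z *v u))"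
    by (intro continuous_on_norm linear_continuous_on matrix_vector_mul_bounded_linear)
  moreover have "sphere (0 :: complex^'n) 1 \<noteq> {}"
    by simp
  ultimately obtain v where v: "v \<in> sphere 0 1"
    and v_max: "\<And>y. y \<in> sphere 0 1 \<Longrightarrow> norm (Z *v y) \<le> norm (Z *v v)"
    using continuous_attains_sup[OF compact_sphere] by blast
  have "norm (Z *v u) \<le> norm (Z *v v) * norm u" for u
  proof (cases "u = 0")
    case False
    define y where "y = (1 / norm u) *\<^sub>R u"
    have "y \<in> sphere 0 1"
      using False by (simp add: y_def)
    then have "norm (Z *v y) \<le> norm (Z *v v)"
      by (rule v_max)
    moreover have "norm (Z *v y) = norm (Z *v u) / norm u"
      by (simp add: y_def matrix_vector_mult_scaleR_complex)
    ultimately show ?thesis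
      using False by (simp add: field_simps)
  qed simp
  then show ?thesis
    using that v by simp
qed

lemma gram_form_max_attained:
  fixes Z :: "complex^'n^'n"
  assumes "Z \<noteq> 0"
  obtains lam v where "lam > 0" "v \<noteq> 0" "\<forall>u. inner (Z *v u) (Z *v u) \<le> lam * inner u u"
    "inner (Z *v v) (Z *v v) = lam * inner v v"
proof -
  obtain v where v: "norm v = 1" and v_max: "\<And>u. norm (Z *v u) \<le> norm (Z *v v) * norm u"
    using matrix_vector_norm_max_attained[of Z] by blast
  define lam where "lam = (norm (Z *v v))\<^sup>2"
  have bound: "inner (Z *v u) (Z *v u) \<le> lam * inner u u" for u
  proof -
    have "(norm (Z *v u))\<^sup>2 \<le> (norm (Z *v v) * norm u)\<^sup>2"
      using v_max by (simp add: power_mono)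
    then show ?thesis
      by (simp add: lam_def power2_norm_eq_inner[symmetric] power_mult_distrib)
  qed
  obtain x where x: "Z *v x \<noteq> 0"
    using assms by (metis matrix_eq matrix_vector_mult_0)
  then have "0 < inner (Z *v x) (Z *v x)"
    by simp
  also have "\<dots> \<le> lam * inner x x"
    by (rule bound)
  finally have "lam > 0"
    by (smt (verit) inner_ge_zero mult_nonpos_nonneg)
  moreover have "inner (Z *v v) (Z *v v) = lam * inner v v"
    using v by (simp add: lam_def power2_norm_eq_inner[symmetric])
  moreover have "v \<noteq> 0"
    using v by auto
  ultimately show ?thesis
    using that bound by blast
qed

text \<open>Perturbing a maximiser \<open>w\<close> of the Rayleigh quotient of \<open>Z\<^sup>\<dagger>Z\<close> to \<open>w + t y\<close> shows that
  the coefficient of \<open>t\<close> vanishes.\<close>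

lemma rayleigh_max_first_variation:
  fixes Z :: "complex^'n^'n"
  assumes bound: "\<forall>u. inner (Z *v u) (Z *v u) \<le> lam * inner u u"
    and eq: "inner (Z *v w) (Z *v w) = lam * inner w w"
  shows "inner (Z *v w) (Z *v y) = lam * inner w y"
proof -
  define a where "a = inner (Z *v w) (Z *v y) - lam * inner w y"
  define b where "b = inner (Z *v y) (Z *v y) - lam * inner y y"
  have "2 * t * a + t\<^sup>2 * b \<le> 0" for t
  proof -
    have expand_Z: "inner (Z *v (w + t *\<^sub>R y)) (Z *v (w + t *\<^sub>R y)) = inner (Z *v w) (Z *v w)
        + 2 * t * inner (Z *v w) (Z *v y) + t\<^sup>2 * inner (Z *v y) (Z *v y)"
      by (simp add: matrix_vector_mult_scaleR_complex inner_commute[of "Z *v y" "Z *v w"]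
          power2_eq_square algebra_simps)
    have expand: "inner (w + t *\<^sub>R y) (w + t *\<^sub>R y)
        = inner w w + 2 * t * inner w y + t\<^sup>2 * inner y y"
      by (simp add: inner_commute[of y w] power2_eq_square algebra_simps)
    have "inner (Z *v (w + t *\<^sub>R y)) (Z *v (w + t *\<^sub>R y))
        \<le> lam * inner (w + t *\<^sub>R y) (w + t *\<^sub>R y)"
      using bound by blast
    moreover have "2 * t * a + t\<^sup>2 * b = (inner (Z *v w) (Z *v w) + 2 * t * inner (Z *v w) (Z *v y)
        + t\<^sup>2 * inner (Z *v y) (Z *v y)) - lam * (inner w w + 2 * t * inner w y + t\<^sup>2 * inner y y)"
      by (simp add: a_def b_def eq algebra_simps)
    ultimately show ?thesis
      unfolding expand_Z expand by linarith
  qed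
  then have "a = 0"
    by (intro linear_coeff_zero_if_quadratic_nonpos) blast
  then show ?thesis
    by (simp add: a_def)
qed

lemma gram_top_eigenvector_iff:
  fixes Z :: "complex^'n^'n"
  assumes bound: "\<forall>u. inner (Z *v u) (Z *v u) \<le> lam * inner u u"
  shows "(madj Z ** Z) *v w = cscale (complex_of_real lam) w
           \<longleftrightarrow> inner (Z *v w) (Z *v w) = lam * inner w w"
proof
  assume eigen: "(madj Z ** Z) *v w = cscale (complex_of_real lam) w"
  have "inner (Z *v w) (Z *v w) = inner ((madj Z ** Z) *v w) w"
    by (simp add: inner_gram)
  also have "\<dots> = lam * inner w w"
    by (simp add: eigen flip: scaleR_eq_cscale)
  finally show "inner (Z *v w) (Z *v w) = lam * inner w w" .
next
  assume eq: "inner (Z *v w) (Z *v w) = lam * inner w w"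
  define r where "r = (madj Z ** Z) *v w - lam *\<^sub>R w"
  have "inner r r = 0"
    using rayleigh_max_first_variation[OF bound eq, of r]
    by (simp add: r_def inner_diff_left inner_gram)
  then show "(madj Z ** Z) *v w = cscale (complex_of_real lam) w"
    by (simp add: r_def scaleR_eq_cscale)
qed

lemma cinner_dual_commutator_eigenvector:
  assumes "madj H = H" "madj W = W" and eigen: "W *v u = cscale (complex_of_real lam) u"
  shows "cinner u (dual_commutator H W *v u) = 0"
proof -
  have "cinner u (W *v (H *v u)) = cinner (W *v u) (H *v u)"
    by (simp add: cinner_madj assms(2))
  then have "cinner u (W *v (H *v u)) = complex_of_real lam * cinner u (H *v u)"
    by (simp add: eigen cinner_cscale_left)
  moreover have "cinner u (H *v (W *v u)) = complex_of_real lam * cinner u (H *v u)"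
    by (simp add: eigen matrix_vector_mult_cscale cinner_cscale_right)
  ultimately show ?thesis
    by (simp add: dual_commutator_def msc_matrix_vector_mult matrix_vector_mult_diff_rdistrib
        cinner_cscale_right cinner_diff_right flip: matrix_vector_mul_assoc)
qed

lemma Re_cinner_dual_dissipator_gram_eigenvector:
  fixes Z :: "complex^'n^'n"
  assumes eigen: "(madj Z ** Z) *v u = cscale (complex_of_real lam) u"
  shows "Re (cinner u (dual_dissipator M (madj Z ** Z) *v u))
    = 2 * (inner (Z *v (M *v u)) (Z *v (M *v u)) - lam * inner (M *v u) (M *v u))"
proof -
  let ?W = "madj Z ** Z"
  have "dual_dissipator M ?W *v u = cscale 2 (madj M *v (?W *v (M *v u)))
      - (madj M *v (M *v (?W *v u)) + ?W *v (madj M *v (M *v u)))"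
    by (simp add: dual_dissipator_def msc_matrix_vector_mult matrix_vector_mult_diff_rdistrib
        matrix_vector_mult_add_rdistrib flip: matrix_vector_mul_assoc)
  moreover have "cinner u (madj M *v (?W *v (M *v u))) = cinner (Z *v (M *v u)) (Z *v (M *v u))"
    by (simp add: cinner_madj[symmetric] flip: matrix_vector_mul_assoc)
  moreover have "cinner u (madj M *v (M *v (?W *v u))) = complex_of_real lam * cinner (M *v u) (M *v u)"
    by (simp add: cinner_madj[symmetric] eigen matrix_vector_mult_cscale cinner_cscale_right)
  moreover have "cinner u (?W *v (madj M *v (M *v u))) = cinner (?W *v u) (madj M *v (M *v u))"
    by (simp add: cinner_madj madj_matrix_mult)
  then have "cinner u (?W *v (madj M *v (M *v u))) = complex_of_real lam * cinner (M *v u) (M *v u)"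
    by (simp add: eigen cinner_cscale_left matrix_vector_mult_cscale cinner_madj[symmetric])
  ultimately show ?thesis
    by (simp add: cinner_diff_right cinner_add_right cinner_cscale_right Re_cinner)
qed

lemma Re_cinner_dual_liouvillian_gram_eigenvector:
  fixes Z :: "complex^'n^'n"
  assumes "finite K" "madj H = H"
    and eigen: "(madj Z ** Z) *v u = cscale (complex_of_real lam) u"
  shows "Re (cinner u (dual_liouvillian H K L \<gamma> (madj Z ** Z) *v u))
    = (\<Sum>k\<in>K. \<gamma> k * (2 * (inner (Z *v (L k *v u)) (Z *v (L k *v u))
                              - lam * inner (L k *v u) (L k *v u))))"
proof -
  have "cinner u (dual_liouvillian H K L \<gamma> (madj Z ** Z) *v u)
      = cinner u (dual_commutator H (madj Z ** Z) *v u)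
        + (\<Sum>k\<in>K. complex_of_real (\<gamma> k) * cinner u (dual_dissipator (L k) (madj Z ** Z) *v u))"
    by (simp add: dual_liouvillian_def assms(1) matrix_vector_mult_add_rdistrib
        matrix_vector_mult_sum_left msc_matrix_vector_mult cinner_add_right cinner_sum_right
        cinner_cscale_right)
  moreover have "cinner u (dual_commutator H (madj Z ** Z) *v u) = 0"
    using cinner_dual_commutator_eigenvector[OF assms(2) _ eigen] by (simp add: madj_matrix_mult)
  ultimately have "Re (cinner u (dual_liouvillian H K L \<gamma> (madj Z ** Z) *v u))
      = (\<Sum>k\<in>K. \<gamma> k * Re (cinner u (dual_dissipator (L k) (madj Z ** Z) *v u)))"
    by simp
  then show ?thesis
    by (simp add: Re_cinner_dual_dissipator_gram_eigenvector[OF eigen])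
qed

lemma Re_cinner_dual_liouvillian_gram:
  fixes Z :: "complex^'n^'n"
  assumes "finite K" "madj H = H"
  shows "Re (cinner u (dual_liouvillian H K L \<gamma> (madj Z ** Z) *v u))
    = 2 * Re (cinner (Z *v u) (dual_liouvillian H K L \<gamma> Z *v u))
      + (\<Sum>k\<in>K. 2 * \<gamma> k * inner ((Z ** L k - L k ** Z) *v u) ((Z ** L k - L k ** Z) *v u))"
proof -
  let ?D = "dual_liouvillian H K L \<gamma> Z"
  let ?C = "\<lambda>k. Z ** L k - L k ** Z"
  have "cinner u (dual_liouvillian H K L \<gamma> (madj Z ** Z) *v u)
      = cinner (Z *v u) (?D *v u) + cinner (?D *v u) (Z *v u)
        + (\<Sum>k\<in>K. complex_of_real (2 * \<gamma> k) * cinner (?C k *v u) (?C k *v u))"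
    by (simp add: dual_liouvillian_gram assms matrix_vector_mult_add_rdistrib
        matrix_vector_mult_sum_left msc_matrix_vector_mult cinner_add_right cinner_sum_right
        cinner_cscale_right cinner_madj[symmetric] flip: matrix_vector_mul_assoc)
  moreover have "Re (cinner (?D *v u) (Z *v u)) = Re (cinner (Z *v u) (?D *v u))"
    by (subst cinner_commute) simp
  ultimately show ?thesis
    by (simp add: Re_cinner)
qed

text \<open>If \<open>s\<close> lies in the top eigenspace of \<open>Z\<^sup>\<dagger>Z\<close> and the real part of
  \<open>\<langle>Zs, \<L>\<^sup>*(Z)s\<rangle>\<close> vanishes, comparing the two expressions for
  \<open>Re \<langle>s, \<L>\<^sup>*(Z\<^sup>\<dagger>Z)s\<rangle>\<close> gives a sum of nonpositive terms that is nonnegative, so each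
  \<open>L\<^sub>k s\<close> maximises the Rayleigh quotient as well.\<close>

lemma gram_top_eigenspace_invariant:
  fixes Z :: "complex^'n^'n"
  assumes "finite K" "madj H = H" and rates: "\<forall>k\<in>K. \<gamma> k > 0"
    and bound: "\<forall>u. inner (Z *v u) (Z *v u) \<le> lam * inner u u"
    and eigen: "(madj Z ** Z) *v s = cscale (complex_of_real lam) s"
    and Re_zero: "Re (cinner (Z *v s) (dual_liouvillian H K L \<gamma> Z *v s)) = 0"
    and k: "k \<in> K"
  shows "(madj Z ** Z) *v (L k *v s) = cscale (complex_of_real lam) (L k *v s)"
proof -
  define f where "f j = \<gamma> j * (2 * (inner (Z *v (L j *v s)) (Z *v (L j *v s))
                                   - lam * inner (L j *v s) (L j *v s)))" for j
  have f_nonpos: "f j \<le> 0" if "j \<in> K" for j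
    using bound rates that unfolding f_def
    by (metis diff_le_0_iff_le less_eq_real_def mult_nonneg_nonpos zero_le_numeral)
  have "(\<Sum>j\<in>K. 2 * \<gamma> j * inner ((Z ** L j - L j ** Z) *v s) ((Z ** L j - L j ** Z) *v s)) \<ge> 0"
    using rates by (intro sum_nonneg) (simp add: less_imp_le)
  then have "(\<Sum>j\<in>K. f j) \<ge> 0"
    using Re_cinner_dual_liouvillian_gram[OF assms(1,2), where u = s and Z = Z and L = L and \<gamma> = \<gamma>]
      Re_cinner_dual_liouvillian_gram_eigenvector[OF assms(1,2) eigen, where L = L and \<gamma> = \<gamma>] Re_zero
    by (simp add: f_def)
  then have "(\<Sum>j\<in>K. - f j) = 0"
    using f_nonpos by (simp add: sum_negf) (meson antisym sum_nonpos)
  then have "f k = 0"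
    using f_nonpos k assms(1) by (subst (asm) sum_nonneg_eq_0_iff) auto
  then have "inner (Z *v (L k *v s)) (Z *v (L k *v s)) = lam * inner (L k *v s) (L k *v s)"
    using rates k by (auto simp: f_def)
  then show ?thesis
    using gram_top_eigenvector_iff[OF bound] by blast
qed

lemma gram_eigenvector_fixed:
  fixes Z Q :: "complex^'n^'n"
  assumes "Z ** Q = Z" "madj Q = Q" "lam \<noteq> 0"
    and eigen: "(madj Z ** Z) *v u = cscale (complex_of_real lam) u"
  shows "Q *v u = u"
proof -
  have "Q ** madj Z = madj Z"
    using assms(1,2) by (metis madj_matrix_mult)
  then have "Q *v ((madj Z ** Z) *v u) = (madj Z ** Z) *v u"
    by (simp add: matrix_vector_mul_assoc matrix_mul_assoc)
  then have "Q *v cscale (complex_of_real lam) u = cscale (complex_of_real lam) u"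
    by (simp add: eigen)
  then show ?thesis
    using \<open>lam \<noteq> 0\<close> by (simp add: matrix_vector_mult_cscale vec_eq_iff)
qed

lemma Re_cinner_zero_if_compression_imaginary:
  fixes Z Q M :: "complex^'n^'n"
  assumes "Q ** Z = Z" "madj Q = Q" "Q *v s = s"
    and compression: "Q ** M ** Q = msc d Z" and "Re d = 0"
  shows "Re (cinner (Z *v s) (M *v s)) = 0"
proof -
  have "cinner (Z *v s) (M *v s) = cinner (Q *v (Z *v s)) (M *v s)"
    using assms(1) by (simp add: matrix_vector_mul_assoc)
  also have "\<dots> = cinner (Z *v s) ((Q ** M ** Q) *v s)"
    using assms(2,3) by (simp add: cinner_madj flip: matrix_vector_mul_assoc)
  also have "\<dots> = d * complex_of_real (inner (Z *v s) (Z *v s))"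
    by (simp add: compression msc_matrix_vector_mult cinner_cscale_right cinner_self)
  finally show ?thesis
    using \<open>Re d = 0\<close> by simp
qed

lemma dark_space_eq_span: "dark_space H K L = cvec.span {\<phi>. dark_state H K L \<phi>}"
  by (simp add: dark_space_def cspan_eq_span)

lemma dark_state_in_dark_space: "dark_state H K L \<phi> \<Longrightarrow> \<phi> \<in> dark_space H K L"
  by (simp add: dark_space_eq_span cvec.span_base)

lemma L_dark_space:
  assumes "k \<in> K" "d \<in> dark_space H K L"
  shows "L k *v d = 0"
  using assms(2) unfolding dark_space_eq_span
proof (induction rule: cvec.span_induct_alt)
  case (step c x y)
  then show ?case
    using assms(1) by (simp add: matrix_vector_right_distrib matrix_vector_mult_cscale dark_state_def)
qed simp

lemma H_dark_space:
  assumes "d \<in> dark_space H K L"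
  shows "H *v d \<in> dark_space H K L"
  using assms unfolding dark_space_eq_span
proof (induction rule: cvec.span_induct_alt)
  case base
  then show ?case
    by (simp add: cvec.span_zero)
next
  case (step c x y)
  then obtain \<omega> where "H *v x = cscale (complex_of_real \<omega>) x"
    by (auto simp: dark_state_def)
  then have "H *v x \<in> cvec.span {\<phi>. dark_state H K L \<phi>}"
    using step by (simp add: cvec.span_base cvec.span_scale)
  then show ?case
    using step by (simp add: matrix_vector_right_distrib matrix_vector_mult_cscale cvec.span_add
        cvec.span_scale)
qed

text \<open>A vector solving the eigenvalue equation of the damped non-Hermitian part of \<open>\<L>\<close>
  for a purely imaginary eigenvalue is annihilated by the damping: the real part of its
  quadratic form is \<open>-\<Sum>\<^sub>k \<gamma>\<^sub>k \<parallel>L\<^sub>k w\<parallel>\<^sup>2\<close>.\<close>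

lemma dark_state_if_damped_eigenvector:
  assumes "finite K" "madj H = H" and rates: "\<forall>k\<in>K. \<gamma> k > 0"
    and eq: "cscale (- \<i>) (H *v w - cscale (complex_of_real \<omega>) w)
        - (\<Sum>k\<in>K. cscale (complex_of_real (\<gamma> k)) (madj (L k) *v (L k *v w)))
      = cscale (\<i> * complex_of_real \<Lambda>) w"
  shows "dark_state H K L w"
proof -
  let ?c = "\<i> * complex_of_real \<Lambda>"
  let ?v = "cscale (- \<i>) (H *v w - cscale (complex_of_real \<omega>) w)"
  have ci: "cinner w ?v - (\<Sum>k\<in>K. complex_of_real (\<gamma> k) * cinner (L k *v w) (L k *v w))
      = ?c * cinner w w"
    using arg_cong[OF eq, of "cinner w"] assms(1)
    by (simp add: cinner_diff_right cinner_sum_right cinner_cscale_right cinner_madj[symmetric])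
  have "Re (cinner w ?v) - (\<Sum>k\<in>K. \<gamma> k * inner (L k *v w) (L k *v w))
      = Re (?c * cinner w w)"
    using arg_cong[OF ci, of Re] by (simp add: Re_cinner)
  moreover have "Re (cinner w ?v) = 0"
    using Im_cinner_hermitian[OF assms(2)]
    by (simp add: cinner_neg_right cinner_cscale_right cinner_diff_right cinner_self)
  moreover have "Re (?c * cinner w w) = 0"
    by (simp add: cinner_self)
  ultimately have "(\<Sum>k\<in>K. \<gamma> k * inner (L k *v w) (L k *v w)) = 0"
    by linarith
  then have L_w: "\<forall>k\<in>K. L k *v w = 0"
    using assms(1) rates by (subst (asm) sum_nonneg_eq_0_iff) (fastforce simp: less_imp_le)+
  then have "(\<Sum>k\<in>K. cscale (complex_of_real (\<gamma> k)) (madj (L k) *v (L k *v w))) = 0"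
    by (intro sum.neutral ballI) simp
  then have v: "?v = cscale ?c w"
    using eq by simp
  have "H *v w - cscale (complex_of_real \<omega>) w = cscale \<i> ?v"
    by (simp add: vec_eq_iff)
  also have "\<dots> = cscale (complex_of_real (- \<Lambda>)) w"
    unfolding v by (simp add: vec_eq_iff)
  finally have "H *v w = cscale (complex_of_real (\<omega> - \<Lambda>)) w"
    by (simp add: vec_eq_iff algebra_simps)
  then show ?thesis
    using L_w unfolding dark_state_def by blast
qed

lemma dark_state_image_damped_eigenoperator:
  assumes "finite K" "madj H = H" "\<forall>k\<in>K. \<gamma> k > 0"
    and eq: "msc (- \<i>) (H ** Z - Z ** H)
        - (\<Sum>k\<in>K. msc (complex_of_real (\<gamma> k)) (madj (L k) ** L k ** Z))
      = msc (\<i> * complex_of_real \<Lambda>) Z"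
    and "dark_state H K L \<phi>"
  shows "dark_state H K L (Z *v \<phi>)"
proof -
  obtain \<omega> where H_\<phi>: "H *v \<phi> = cscale (complex_of_real \<omega>) \<phi>"
    using \<open>dark_state H K L \<phi>\<close> by (auto simp: dark_state_def)
  have "cscale (- \<i>) (H *v (Z *v \<phi>) - cscale (complex_of_real \<omega>) (Z *v \<phi>))
      - (\<Sum>k\<in>K. cscale (complex_of_real (\<gamma> k)) (madj (L k) *v (L k *v (Z *v \<phi>))))
    = cscale (\<i> * complex_of_real \<Lambda>) (Z *v \<phi>)"
    using arg_cong[OF eq, of "\<lambda>M. M *v \<phi>"]
    by (simp add: matrix_vector_mult_diff_rdistrib matrix_vector_mult_neg_left
        msc_matrix_vector_mult matrix_vector_mult_sum_left assms(1) H_\<phi>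
        matrix_vector_mult_cscale flip: matrix_vector_mul_assoc)
  then show ?thesis
    using assms(1-3) by (intro dark_state_if_damped_eigenvector)
qed

section \<open>Block structure relative to the dark space\<close>

locale dark_projection =
  fixes H :: "complex^'n^'n" and K :: "'k set" and L :: "'k \<Rightarrow> complex^'n^'n"
    and \<gamma> :: "'k \<Rightarrow> real" and P :: "complex^'n^'n"
  assumes finite_K: "finite K" and hermitian_H: "madj H = H" and rates_pos: "\<forall>k\<in>K. \<gamma> k > 0"
    and madj_P: "madj P = P" and P_idem: "P ** P = P"
    and P_range: "\<forall>x. P *v x \<in> dark_space H K L"
    and P_fixes: "\<forall>d\<in>dark_space H K L. P *v d = d"
begin

abbreviation "\<D> \<equiv> dark_space H K L"
abbreviation "\<L> \<equiv> liouvillian H K L \<gamma>"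

definition Q :: "complex^'n^'n" where "Q = mat 1 - P"

lemma L_mult_P:
  assumes "k \<in> K" shows "L k ** P = 0"
proof -
  have "L k *v (P *v x) = 0" for x
    using L_dark_space[OF assms] P_range by blast
  then show ?thesis
    unfolding matrix_eq by (simp flip: matrix_vector_mul_assoc)
qed

lemma P_mult_madj_L: "k \<in> K \<Longrightarrow> P ** madj (L k) = 0"
  using L_mult_P[of k] by (metis madj_matrix_mult madj_zero madj_P)

lemma H_commute_P: "H ** P = P ** H"
proof -
  have PHP: "P ** H ** P = H ** P"
    unfolding matrix_eq by (simp add: P_fixes H_dark_space P_range flip: matrix_vector_mul_assoc)
  have "P ** H = madj (P ** H ** P)"
    by (simp add: PHP madj_matrix_mult madj_P hermitian_H)
  also have "\<dots> = P ** H ** P"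
    by (simp add: madj_matrix_mult madj_P hermitian_H matrix_mul_assoc)
  finally show ?thesis
    using PHP by simp
qed

lemma madj_Q: "madj Q = Q"
  by (simp add: Q_def madj_diff madj_P vec_eq_iff mat_def)

lemma Q_idem: "Q ** Q = Q"
  by (simp add: Q_def matrix_mult_distribs P_idem)

lemma Q_mult_P: "Q ** P = 0"
  by (simp add: Q_def matrix_mult_distribs P_idem)

lemma P_mult_Q: "P ** Q = 0"
  by (simp add: Q_def matrix_mult_distribs P_idem)

lemma Q_commute_H: "Q ** H = H ** Q"
  by (simp add: Q_def matrix_mult_distribs H_commute_P)

lemma Q_mult_gram_L: "k \<in> K \<Longrightarrow> Q ** madj (L k) ** L k = madj (L k) ** L k"
  by (simp add: Q_def matrix_mult_distribs P_mult_madj_L)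

lemma Q_dark_space: "d \<in> \<D> \<Longrightarrow> Q *v d = 0"
  by (simp add: Q_def matrix_vector_mult_diff_rdistrib P_fixes)

lemma block_decomp: "X = P ** X + Q ** X ** P + Q ** X ** Q"
  by (simp add: Q_def matrix_mult_distribs algebra_simps)

text \<open>The same identities with an arbitrary left factor, so that they apply to products
  in the left-associated normal form produced by \<open>matrix_mul_assoc\<close>.\<close>

lemma block_simps_assoc:
  "M ** Q ** P = 0" "M ** P ** Q = 0" "M ** Q ** Q = M ** Q" "M ** P ** P = M ** P"
  "M ** Q ** H = M ** H ** Q" "M ** P ** H = M ** H ** P"
  "k \<in> K \<Longrightarrow> M ** L k ** P = 0" "k \<in> K \<Longrightarrow> M ** P ** madj (L k) = 0"
  "k \<in> K \<Longrightarrow> M ** Q ** madj (L k) ** L k = M ** madj (L k) ** L k"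
  by (simp_all add: Q_mult_P P_mult_Q Q_idem P_idem Q_commute_H H_commute_P L_mult_P
      P_mult_madj_L flip: matrix_mul_assoc)
    (metis Q_mult_gram_L matrix_mul_assoc)

lemmas block_simps = Q_mult_P P_mult_Q Q_idem P_idem Q_commute_H H_commute_P[symmetric]
  L_mult_P P_mult_madj_L Q_mult_gram_L block_simps_assoc

lemma Q_liouvillian_P: "Q ** \<L> (P ** A) = 0"
  unfolding liouvillian_def
  by (simp add: matrix_mult_distribs finite_K matrix_mul_assoc block_simps cong: sum.cong)

lemma liouvillian_P_Q: "\<L> (A ** P) ** Q = 0"
  unfolding liouvillian_def
  by (simp add: matrix_mult_distribs finite_K matrix_mul_assoc block_simps cong: sum.cong)

lemma QQ_block_liouvillian: "Q ** \<L> X ** Q = Q ** \<L> (Q ** X ** Q) ** Q"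
proof -
  have "\<L> X = \<L> (P ** X) + \<L> (Q ** X ** P) + \<L> (Q ** X ** Q)"
    by (subst block_decomp[of X]) (simp add: liouvillian_add finite_K matrix_mul_assoc)
  then have "Q ** \<L> X ** Q
      = Q ** \<L> (P ** X) ** Q + Q ** (\<L> (Q ** X ** P) ** Q) + Q ** \<L> (Q ** X ** Q) ** Q"
    by (simp add: matrix_mult_distribs matrix_mul_assoc)
  then show ?thesis
    using Q_liouvillian_P[of X] liouvillian_P_Q[of "Q ** X"] by simp
qed

lemma QP_block_liouvillian:
  assumes "Q ** X ** Q = 0"
  shows "Q ** \<L> X ** P = msc (- \<i>) (H ** (Q ** X ** P) - (Q ** X ** P) ** H)
     - (\<Sum>k\<in>K. msc (complex_of_real (\<gamma> k)) (madj (L k) ** L k ** (Q ** X ** P)))"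
proof -
  have "\<L> X = \<L> (P ** X) + \<L> (Q ** X ** P)"
    using assms by (subst block_decomp[of X]) (simp add: liouvillian_add finite_K matrix_mul_assoc)
  then have "Q ** \<L> X ** P = Q ** \<L> (Q ** X ** P) ** P"
    using Q_liouvillian_P[of X] by (simp add: matrix_mult_distribs matrix_mul_assoc)
  also have "\<dots> = msc (- \<i>) (H ** (Q ** X ** P) - (Q ** X ** P) ** H)
     - (\<Sum>k\<in>K. msc (complex_of_real (\<gamma> k)) (madj (L k) ** L k ** (Q ** X ** P)))"
    unfolding liouvillian_def
    by (simp add: matrix_mult_distribs finite_K matrix_mul_assoc block_simps sum_negf cong: sum.cong)
  finally show ?thesis .
qed

lemma forbidden_subspace_if_dual_eigenvector:
  assumes "Z \<noteq> 0" and QZQ: "Q ** Z ** Q = Z"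
    and dual_eigen: "Q ** dual_liouvillian H K L \<gamma> Z ** Q = msc d Z" and "Re d = 0"
  shows "\<exists>S. csubspace S \<and> S \<noteq> {0} \<and> (\<forall>s\<in>S. \<forall>d\<in>\<D>. cinner s d = 0)
           \<and> (\<forall>k\<in>K. \<forall>s\<in>S. L k *v s \<in> S)"
proof -
  obtain lam v where "lam > 0" "v \<noteq> 0"
    and bound: "\<forall>u. inner (Z *v u) (Z *v u) \<le> lam * inner u u"
    and "inner (Z *v v) (Z *v v) = lam * inner v v"
    using gram_form_max_attained[OF \<open>Z \<noteq> 0\<close>] by blast
  define E where "E = {u. (madj Z ** Z) *v u = cscale (complex_of_real lam) u}"
  have "Q ** Z = Z" "Z ** Q = Z"
    by (metis QZQ Q_idem matrix_mul_assoc)+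
  have Q_fixes_E: "Q *v u = u" if "u \<in> E" for u
    by (rule gram_eigenvector_fixed[OF \<open>Z ** Q = Z\<close> madj_Q, where lam = lam])
      (use that \<open>lam > 0\<close> in \<open>simp_all add: E_def\<close>)
  have "csubspace E"
    unfolding csubspace_def E_def
    by (simp add: matrix_vector_mult_cscale vec_eq_iff algebra_simps)
  moreover have "E \<noteq> {0}"
    using \<open>v \<noteq> 0\<close> gram_top_eigenvector_iff[OF bound] \<open>inner (Z *v v) (Z *v v) = lam * inner v v\<close>
    unfolding E_def by blast
  moreover have "cinner s d = 0" if "s \<in> E" "d \<in> \<D>" for s d
  proof -
    have "cinner s d = cinner (Q *v s) d"
      using Q_fixes_E[OF \<open>s \<in> E\<close>] by simp
    also have "\<dots> = cinner s (Q *v d)"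
      by (simp add: cinner_madj madj_Q)
    finally show ?thesis
      using Q_dark_space[OF \<open>d \<in> \<D>\<close>] by (simp add: cinner_zero_right)
  qed
  moreover have "L k *v s \<in> E" if "k \<in> K" "s \<in> E" for k s
  proof -
    have "Re (cinner (Z *v s) (dual_liouvillian H K L \<gamma> Z *v s)) = 0"
      using \<open>Q ** Z = Z\<close> madj_Q Q_fixes_E[OF \<open>s \<in> E\<close>] dual_eigen \<open>Re d = 0\<close>
      by (rule Re_cinner_zero_if_compression_imaginary)
    then show ?thesis
      using gram_top_eigenspace_invariant[OF finite_K hermitian_H rates_pos bound] that
      unfolding E_def by blast
  qed
  ultimately show ?thesis
    by blast
qed

text \<open>The compressed eigenvalue problem \<open>Q \<L>(QYQ) Q = c QYQ\<close>, extended by the identity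
  off the \<open>QQ\<close> block so that it becomes an operator on the whole matrix space, and its
  Hilbert--Schmidt adjoint.\<close>

definition compressed_liouvillian :: "complex \<Rightarrow> complex^'n^'n \<Rightarrow> complex^'n^'n" where
  "compressed_liouvillian c Y = Q ** \<L> (Q ** Y ** Q) ** Q - msc c (Q ** Y ** Q) + (Y - Q ** Y ** Q)"

definition compressed_dual_liouvillian :: "complex \<Rightarrow> complex^'n^'n \<Rightarrow> complex^'n^'n" where
  "compressed_dual_liouvillian c Z =
     Q ** dual_liouvillian H K L \<gamma> (Q ** Z ** Q) ** Q - msc c (Q ** Z ** Q) + (Z - Q ** Z ** Q)"

lemma linear_compressed_liouvillian: "linear (compressed_liouvillian c)"
proof (rule linearI)
  show "compressed_liouvillian c (A + B) = compressed_liouvillian c A + compressed_liouvillian c B"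
    for A B
    unfolding compressed_liouvillian_def
    by (simp add: matrix_add_ldistrib matrix_add_rdistrib liouvillian_add[OF finite_K] msc_add)
  show "compressed_liouvillian c (r *\<^sub>R A) = r *\<^sub>R compressed_liouvillian c A" for r A
    unfolding compressed_liouvillian_def scaleR_eq_msc
    by (simp add: matrix_mult_msc_left matrix_mult_msc_right liouvillian_msc[OF finite_K]
        msc_add msc_diff msc_msc mult.commute)
qed

lemma inner_compressed_liouvillian:
  "inner (compressed_liouvillian c Y) Z = inner Y (compressed_dual_liouvillian (cnj c) Z)"
proof -
  have hs_Q: "hs (Q ** M ** Q) N = hs M (Q ** N ** Q)" for M N
    by (simp add: hs_sandwich madj_Q)
  have "hs (compressed_liouvillian c Y) Z = hs Y (compressed_dual_liouvillian (cnj c) Z)"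
    unfolding compressed_liouvillian_def compressed_dual_liouvillian_def
    by (simp add: hs_add_left hs_diff_left hs_msc_left hs_Q hs_liouvillian[OF finite_K hermitian_H]
        hs_add_right hs_diff_right hs_msc_right)
  then show ?thesis
    by (simp add: inner_eq_Re_hs)
qed

lemma compressed_dual_liouvillian_eq_0D:
  assumes "compressed_dual_liouvillian c Z = 0"
  shows "Q ** Z ** Q = Z" and "Q ** dual_liouvillian H K L \<gamma> Z ** Q = msc c Z"
proof -
  have "Q ** compressed_dual_liouvillian c Z ** Q
      = Q ** dual_liouvillian H K L \<gamma> (Q ** Z ** Q) ** Q - msc c (Q ** Z ** Q)"
    unfolding compressed_dual_liouvillian_def
    by (simp add: matrix_mult_distribs matrix_mul_assoc block_simps)
  then have "Q ** dual_liouvillian H K L \<gamma> (Q ** Z ** Q) ** Q = msc c (Q ** Z ** Q)"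
    using assms by simp
  moreover show "Q ** Z ** Q = Z"
    using assms calculation by (simp add: compressed_dual_liouvillian_def)
  ultimately show "Q ** dual_liouvillian H K L \<gamma> Z ** Q = msc c Z"
    by simp
qed

lemma QQ_block_zero:
  assumes no_subspace: "\<not> (\<exists>S. csubspace S \<and> S \<noteq> {0} \<and> (\<forall>s\<in>S. \<forall>d\<in>\<D>. cinner s d = 0)
                          \<and> (\<forall>k\<in>K. \<forall>s\<in>S. L k *v s \<in> S))"
    and eigen: "\<L> X = msc (\<i> * complex_of_real \<Lambda>) X"
  shows "Q ** X ** Q = 0"
proof (rule ccontr)
  let ?c = "\<i> * complex_of_real \<Lambda>"
  assume "Q ** X ** Q \<noteq> 0"
  moreover have "Q ** \<L> (Q ** X ** Q) ** Q = msc ?c (Q ** X ** Q)"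
    by (simp add: QQ_block_liouvillian[symmetric] eigen matrix_mult_msc_left matrix_mult_msc_right)
  then have "compressed_liouvillian ?c (Q ** X ** Q) = 0"
    by (simp add: compressed_liouvillian_def block_simps matrix_mul_assoc)
  ultimately obtain Z where "Z \<noteq> 0" "compressed_dual_liouvillian (cnj ?c) Z = 0"
    using adjoint_kernel_nontrivial[OF linear_compressed_liouvillian inner_compressed_liouvillian]
    by blast
  moreover have "Re (cnj ?c) = 0"
    by simp
  ultimately show False
    using forbidden_subspace_if_dual_eigenvector compressed_dual_liouvillian_eq_0D no_subspace
    by blast
qed

lemma QP_block_zero:
  assumes eigen: "\<L> X = msc (\<i> * complex_of_real \<Lambda>) X" and QXQ: "Q ** X ** Q = 0"
  shows "Q ** X ** P = 0"
proof -
  define Z where "Z = Q ** X ** P"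
  have Z_eq: "msc (- \<i>) (H ** Z - Z ** H)
      - (\<Sum>k\<in>K. msc (complex_of_real (\<gamma> k)) (madj (L k) ** L k ** Z))
      = msc (\<i> * complex_of_real \<Lambda>) Z"
    using QP_block_liouvillian[OF QXQ]
    by (simp add: Z_def eigen matrix_mult_msc_left matrix_mult_msc_right)
  have Z_dark: "Z *v \<phi> = 0" if "dark_state H K L \<phi>" for \<phi>
  proof -
    have "dark_state H K L (Z *v \<phi>)"
      using finite_K hermitian_H rates_pos Z_eq that by (rule dark_state_image_damped_eigenoperator)
    then have "P *v (Z *v \<phi>) = Z *v \<phi>"
      using P_fixes dark_state_in_dark_space by blast
    moreover have "P *v (Z *v \<phi>) = 0"
      by (simp add: Z_def matrix_vector_mul_assoc matrix_mul_assoc P_mult_Q)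
    ultimately show ?thesis
      by simp
  qed
  have "Z *v d = 0" if "d \<in> \<D>" for d
    using that unfolding dark_space_eq_span
  proof (induction rule: cvec.span_induct_alt)
    case (step c x y)
    then show ?case
      by (simp add: Z_dark matrix_vector_right_distrib matrix_vector_mult_cscale)
  qed simp
  moreover have "Z ** P = Z"
    by (simp add: Z_def block_simps)
  ultimately have "Z *v x = 0" for x
    using P_range by (metis matrix_vector_mul_assoc)
  then show ?thesis
    unfolding matrix_eq Z_def by simp
qed

lemma eigenoperator_eq_PXP:
  assumes no_subspace: "\<not> (\<exists>S. csubspace S \<and> S \<noteq> {0} \<and> (\<forall>s\<in>S. \<forall>d\<in>\<D>. cinner s d = 0)
                          \<and> (\<forall>k\<in>K. \<forall>s\<in>S. L k *v s \<in> S))"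
    and eigen: "\<L> X = msc (\<i> * complex_of_real \<Lambda>) X"
  shows "X = P ** X ** P"
proof -
  have QXQ: "Q ** X ** Q = 0"
    using no_subspace eigen by (rule QQ_block_zero)
  have "\<L> (madj X) = msc (\<i> * complex_of_real (- \<Lambda>)) (madj X)"
    using arg_cong[OF eigen, of madj]
    by (simp add: madj_liouvillian[OF finite_K hermitian_H] madj_msc)
  moreover have "Q ** madj X ** Q = 0"
    using arg_cong[OF QXQ, of madj] by (simp add: madj_matrix_mult madj_Q matrix_mul_assoc)
  ultimately have "Q ** madj X ** P = 0"
    by (rule QP_block_zero)
  then have "madj (Q ** madj X ** P) = 0"
    by simp
  then have "P ** X ** Q = 0"
    by (simp add: madj_matrix_mult madj_Q madj_P matrix_mul_assoc)
  moreover have "Q ** X ** P = 0"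
    using eigen QXQ by (rule QP_block_zero)
  moreover have "X = P ** X ** P + P ** X ** Q + Q ** X ** P + Q ** X ** Q"
    by (simp add: Q_def matrix_mult_distribs algebra_simps)
  ultimately show ?thesis
    using QXQ by simp
qed

end

lemma outer_add_left: "outer (a + b) c = outer a c + outer b c"
  by (simp add: vec_eq_iff algebra_simps)

lemma outer_add_right: "outer c (a + b) = outer c a + outer c b"
  by (simp add: vec_eq_iff algebra_simps)

lemma outer_cscale_left: "outer (cscale s a) c = msc s (outer a c)"
  by (simp add: vec_eq_iff)

lemma outer_cscale_right: "outer c (cscale s a) = msc (cnj s) (outer c a)"
  by (simp add: vec_eq_iff)

lemma outer_zero_left: "outer 0 c = 0"
  by (simp add: vec_eq_iff)

lemma outer_zero_right: "outer c 0 = 0"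
  by (simp add: vec_eq_iff)

lemma matrix_mult_madj_eq_sum_outer:
  "A ** madj B = (\<Sum>j\<in>UNIV. outer (A *v axis j 1) (B *v axis j 1))"
  by (simp add: vec_eq_iff matrix_matrix_mult_nth matrix_vector_mult_axis)

lemma outer_in_span:
  assumes a: "a \<in> cvec.span G" and b: "b \<in> cvec.span G"
  shows "outer a b \<in> cmat.span {outer \<phi> \<psi> | \<phi> \<psi>. \<phi> \<in> G \<and> \<psi> \<in> G}"
proof -
  let ?O = "{outer \<phi> \<psi> | \<phi> \<psi>. \<phi> \<in> G \<and> \<psi> \<in> G}"
  have outer_a: "outer a \<psi> \<in> cmat.span ?O" if "\<psi> \<in> G" for \<psi>
    using a
  proof (induction rule: cvec.span_induct_alt)
    case base
    then show ?case
      by (simp add: outer_zero_left cmat.span_zero)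
  next
    case (step c x y)
    have "outer x \<psi> \<in> cmat.span ?O"
      using step that by (blast intro: cmat.span_base)
    then show ?case
      using step by (simp add: outer_add_left outer_cscale_left cmat.span_add cmat.span_scale)
  qed
  show ?thesis
    using b
  proof (induction rule: cvec.span_induct_alt)
    case base
    then show ?case
      by (simp add: outer_zero_right cmat.span_zero)
  next
    case (step c x y)
    then show ?case
      using outer_a by (simp add: outer_add_right outer_cscale_right cmat.span_add cmat.span_scale)
  qed
qed

lemma span_outer_products_sum:
  assumes "X \<in> cmat.span {outer \<phi> \<psi> | \<phi> \<psi>. \<phi> \<in> G \<and> \<psi> \<in> G}"
  shows "\<exists>F c. finite F \<and> (\<forall>(\<phi>, \<psi>)\<in>F. \<phi> \<in> G \<and> \<psi> \<in> G)
           \<and> X = (\<Sum>(\<phi>, \<psi>)\<in>F. msc (c (\<phi>, \<psi>)) (outer \<phi> \<psi>))"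
proof -
  obtain t r where t: "finite t" "t \<subseteq> {outer \<phi> \<psi> | \<phi> \<psi>. \<phi> \<in> G \<and> \<psi> \<in> G}"
    and X: "X = (\<Sum>m\<in>t. msc (r m) m)"
    using assms unfolding cmat.span_explicit by blast
  define g where "g m = (SOME pr. fst pr \<in> G \<and> snd pr \<in> G \<and> m = outer (fst pr) (snd pr))" for m
  have g: "fst (g m) \<in> G \<and> snd (g m) \<in> G \<and> m = outer (fst (g m)) (snd (g m))" if m: "m \<in> t" for m
  proof -
    obtain \<phi> \<psi> where "\<phi> \<in> G" "\<psi> \<in> G" "m = outer \<phi> \<psi>"
      using t m by blast
    then have "\<exists>pr. fst pr \<in> G \<and> snd pr \<in> G \<and> m = outer (fst pr) (snd pr)"
      by (intro exI[of _ "(\<phi>, \<psi>)"]) simp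
    then show ?thesis
      unfolding g_def by (rule someI_ex)
  qed
  have "inj_on g t"
    by (rule inj_onI) (metis g)
  define c where "c pr = r (outer (fst pr) (snd pr))" for pr
  have "(\<Sum>(\<phi>, \<psi>)\<in>g ` t. msc (c (\<phi>, \<psi>)) (outer \<phi> \<psi>))
      = (\<Sum>m\<in>t. msc (c (g m)) (outer (fst (g m)) (snd (g m))))"
    by (simp add: sum.reindex[OF \<open>inj_on g t\<close>] case_prod_beta)
  also have "\<dots> = X"
    unfolding X by (rule sum.cong[OF refl]) (metis c_def g)
  finally have "X = (\<Sum>(\<phi>, \<psi>)\<in>g ` t. msc (c (\<phi>, \<psi>)) (outer \<phi> \<psi>))"
    by simp
  moreover have "\<forall>pr\<in>g ` t. fst pr \<in> G \<and> snd pr \<in> G"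
    using g by blast
  then have "\<forall>(\<phi>, \<psi>)\<in>g ` t. \<phi> \<in> G \<and> \<psi> \<in> G"
    by (simp add: case_prod_unfold)
  ultimately show ?thesis
    using finite_imageI[OF t(1)] by (intro exI[of _ "g ` t"] exI[of _ c]) blast
qed

lemma outer_sum_representation:
  fixes X P :: "complex^'n^'n"
  assumes X: "X = P ** X ** P" and "madj P = P" "P ** P = P"
    and P_range: "\<forall>x. P *v x \<in> cvec.span G"
  shows "\<exists>F c. finite F \<and> (\<forall>(\<phi>, \<psi>)\<in>F. \<phi> \<in> G \<and> \<psi> \<in> G)
           \<and> X = (\<Sum>(\<phi>, \<psi>)\<in>F. msc (c (\<phi>, \<psi>)) (outer \<phi> \<psi>))"
proof (rule span_outer_products_sum)
  have "X ** madj P = X"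
    using assms by (metis matrix_mul_assoc)
  then have X_sum: "X = (\<Sum>j\<in>UNIV. outer (X *v axis j 1) (P *v axis j 1))"
    by (simp add: matrix_mult_madj_eq_sum_outer)
  have X_range: "X *v x \<in> cvec.span G" for x
  proof -
    have "X *v x = P *v ((X ** P) *v x)"
      by (subst X) (simp add: matrix_vector_mul_assoc matrix_mul_assoc)
    then show ?thesis
      using P_range by simp
  qed
  show "X \<in> cmat.span {outer \<phi> \<psi> | \<phi> \<psi>. \<phi> \<in> G \<and> \<psi> \<in> G}"
    by (subst X_sum, rule cmat.span_sum, rule outer_in_span) (simp_all add: X_range P_range)
qed

theorem theorem2:
  fixes H :: "complex^'n^'n" and K :: "'k set" and L :: "'k \<Rightarrow> complex^'n^'n"
    and \<gamma> :: "'k \<Rightarrow> real" and X :: "complex^'n^'n" and \<Lambda> :: real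
  assumes "finite K"
    and "madj H = H"
    and "\<forall>k\<in>K. \<gamma> k > 0"
    and "\<not> (\<exists>S. csubspace S \<and> S \<noteq> {0}
               \<and> (\<forall>s\<in>S. \<forall>d\<in>dark_space H K L. cinner s d = 0)
               \<and> (\<forall>k\<in>K. \<forall>s\<in>S. L k *v s \<in> S))"
    and "X \<noteq> 0"
    and "liouvillian H K L \<gamma> X = msc (\<i> * complex_of_real \<Lambda>) X"
  shows "\<exists>F c. finite F
           \<and> (\<forall>(\<phi>, \<psi>)\<in>F. dark_state H K L \<phi> \<and> dark_state H K L \<psi>)
           \<and> X = (\<Sum>(\<phi>, \<psi>)\<in>F. msc (c (\<phi>, \<psi>)) (outer \<phi> \<psi>))"
proof -
  have "cvec.subspace (dark_space H K L)"
    by (simp add: dark_space_eq_span)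
  then obtain P where P: "madj P = P" "P ** P = P" "\<forall>x. P *v x \<in> dark_space H K L"
    "\<forall>d\<in>dark_space H K L. P *v d = d"
    by (rule orthogonal_projector_exists)
  then interpret dark_projection H K L \<gamma> P
    using assms(1-3) by unfold_locales
  have "X = P ** X ** P"
    using assms(4,6) by (rule eigenoperator_eq_PXP)
  then show ?thesis
    using outer_sum_representation[of X P "{\<phi>. dark_state H K L \<phi>}"] P
    by (simp add: dark_space_eq_span)
qed

end
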